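(* Let $\widehat{\boldsymbol\Sigma}\succ0$ and $l_{\widehat{\boldsymbol\Sigma}}(\mathbf x)=\mathbf x^\top\widehat{\boldsymbol\Sigma}^{-1}\mathbf x$. Define the probability measure $\mathrm{Lev}_{\widehat{\boldsymbol\Sigma},\mathcal X}$ on $\mathbb R^d$ by $\mathrm{Lev}_{\widehat{\boldsymbol\Sigma},\mathcal X}(A)=\mathbb E_{D_{\mathcal X}}\big[\mathbf 1_A\,l_{\widehat{\boldsymbol\Sigma}}(\mathbf x)/\mathrm{tr}(\boldsymbol\Sigma_{D_{\mathcal X}}\widehat{\boldsymbol\Sigma}^{-1})\big]$. Let $t\ge d$, let $\mathbf x_1,\dots,\mathbf x_t$ be i.i.d. from $\mathrm{Lev}_{\widehat{\boldsymbol\Sigma},\mathcal X}$, let $\widetilde{\mathbf x}_i=\sqrt{d}\,\mathbf x_i/\sqrt{l_{\widehat{\boldsymbol\Sigma}}(\mathbf x_i)}$ and $\widetilde{\boldsymbol\Sigma}=\frac1t\sum_{i=1}^t\widetilde{\mathbf x}_i\widetilde{\mathbf x}_i^\top$. Then $\det(\widetilde{\boldsymbol\Sigma}\widehat{\boldsymbol\Sigma}^{-1})\le1$ almost surely, and $\mathbb E\big[\det(\widetilde{\boldsymbol\Sigma}\widehat{\boldsymbol\Sigma}^{-1})\big]\ge\Big(1-\dfrac{d^2}{t}\Big)\dfrac{\det(\boldsymbol\Sigma_{D_{\mathcal X}}\widehat{\boldsymbol\Sigma}^{-1})}{\big(\frac1d\mathrm{tr}(\boldsymbol\Sigma_{D_{\mathcal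 X}}\widehat{\boldsymbol\Sigma}^{-1})\big)^d}$.
   Context: $D_{\mathcal X}$ is a probability distribution on $\mathbb R^d$ with $\mathbb E\|\mathbf x\|^2<\infty$ and invertible $\boldsymbol\Sigma_{D_{\mathcal X}}:=\mathbb E[\mathbf x\mathbf x^\top]$. *)

theory Defs
  imports "HOL-Analysis.Analysis" "HOL-Probability.Probability"
begin

definition pos_def_mat :: "real^'n^'n \<Rightarrow> bool" where
  "pos_def_mat A \<longleftrightarrow> transpose A = A \<and> (\<forall>x. x \<noteq> 0 \<longrightarrow> x \<bullet> (A *v x) > 0)"

definition outer :: "real^'n \<Rightarrow> real^'n^'n" where
  "outer x = (\<chi> i j. x$i * x$j)"

definition second_moment :: "(real^'n) measure \<Rightarrow> real^'n^'n" where
  "second_moment M = (\<chi> i j. \<integral>x. x$i * x$j \<partial>M)"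

definition lev_score :: "real^'n^'n \<Rightarrow> real^'n \<Rightarrow> real" where
  "lev_score S x = x \<bullet> (matrix_inv S *v x)"

definition lev_measure :: "real^'n^'n \<Rightarrow> (real^'n) measure \<Rightarrow> (real^'n) measure" where
  "lev_measure S M = density M (\<lambda>x. ennreal (lev_score S x / trace (second_moment M ** matrix_inv S)))"

definition rescaled_cov :: "real^'n^'n \<Rightarrow> nat \<Rightarrow> (nat \<Rightarrow> real^'n) \<Rightarrow> real^'n^'n" where
  "rescaled_cov S t xs = (1 / real t) *\<^sub>R
     (\<Sum>i<t. outer ((sqrt (real CARD('n)) / sqrt (lev_score S (xs i))) *\<^sub>R xs i))"

end

theory Submission
  imports Defs
begin

text \<open>Write \<open>L\<close> for the inverse of \<open>S\<close>. Since the rescaled covariance is positive semidefinite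
  and \<open>L\<close> is positive definite, \<open>rescaled_cov ** L\<close> is diagonalisable with nonnegative
  eigenvalues (simultaneous diagonalisation), so AM-GM bounds its determinant by
  \<open>(trace / d) ^ d\<close>. Rescaling gives every nonzero sample leverage exactly \<open>d\<close>, hence the trace is
  at most \<open>d\<close> and the determinant at most \<open>1\<close>.

  For the expectation, expand the determinant multilinearly in its rows, each row being an
  average over the \<open>t\<close> samples: only injective assignments of rows to samples survive, and for
  such an assignment independence turns the expected determinant into the determinant of the
  expected rows. The leverage density cancels the rescaling, so this is
  \<open>det ((d / (t * trace (second_moment D ** L))) * second_moment D)\<close>. Counting the
  \<open>t (t - 1) \<dots> (t - d + 1)\<close> injections and using \<open>\<Prod>k<d. 1 - k/t \<ge> 1 - d\<^sup>2/t\<close> gives the bound.\<close>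

section \<open>Simultaneous diagonalisation\<close>

definition pos_semidef_mat :: "real^'n^'n \<Rightarrow> bool" where
  "pos_semidef_mat A \<longleftrightarrow> transpose A = A \<and> (\<forall>x. 0 \<le> x \<bullet> (A *v x))"

lemma inner_matrix_vector_mult_sym:
  fixes M :: "real^'n^'n"
  assumes "transpose M = M"
  shows "x \<bullet> (M *v y) = y \<bullet> (M *v x)"
proof -
  have "x \<bullet> (M *v y) = (transpose M *v x) \<bullet> y"
    by (simp add: dot_lmul_matrix)
  then show ?thesis
    using assms by (simp add: inner_commute)
qed

lemma pos_def_mat_imp_pos_semidef_mat: "pos_def_mat A \<Longrightarrow> pos_semidef_mat A"
  unfolding pos_def_mat_def pos_semidef_mat_def
  by (metis inner_zero_left order.refl order_less_imp_le)

lemma pos_def_mat_invertible: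
  assumes "pos_def_mat A"
  shows "invertible A"
proof -
  have "A *v x = 0 \<Longrightarrow> x = 0" for x
    using assms unfolding pos_def_mat_def by force
  then show ?thesis
    by (simp add: invertible_left_inverse matrix_left_invertible_ker)
qed

lemma matrix_mul_matrix_inv:
  fixes A :: "'a::field^'n^'n"
  assumes "invertible A"
  shows "A ** matrix_inv A = mat 1" and "matrix_inv A ** A = mat 1"
proof -
  have "A ** matrix_inv A = mat 1 \<and> matrix_inv A ** A = mat 1"
    unfolding matrix_inv_def by (rule someI_ex) (use assms in \<open>simp add: invertible_def\<close>)
  then show "A ** matrix_inv A = mat 1" and "matrix_inv A ** A = mat 1"
    by auto
qed

lemma pos_def_mat_matrix_inv:
  assumes pd: "pos_def_mat A"
  shows "pos_def_mat (matrix_inv A)"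
proof -
  let ?L = "matrix_inv A"
  have sym: "transpose A = A" and pos: "\<And>x. x \<noteq> 0 \<Longrightarrow> 0 < x \<bullet> (A *v x)"
    using pd by (auto simp: pos_def_mat_def)
  have AL: "A ** ?L = mat 1"
    using matrix_mul_matrix_inv pos_def_mat_invertible[OF pd] by blast
  have "transpose ?L = (transpose ?L ** A) ** ?L"
    by (metis AL matrix_mul_assoc matrix_mul_rid)
  also have "transpose ?L ** A = mat 1"
    by (metis AL matrix_transpose_mul sym transpose_mat)
  finally have "transpose ?L = ?L"
    by simp
  moreover have "0 < x \<bullet> (?L *v x)" if "x \<noteq> 0" for x
  proof -
    have A_L: "A *v (?L *v x) = x"
      by (simp add: matrix_vector_mul_assoc AL)
    then have "?L *v x \<noteq> 0"
      using that by auto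
    with pos have "0 < (?L *v x) \<bullet> (A *v (?L *v x))"
      by blast
    with A_L show ?thesis
      by (simp add: inner_commute)
  qed
  ultimately show ?thesis
    by (simp add: pos_def_mat_def)
qed

lemma quadratic_form_add_scaled:
  fixes M :: "real^'n^'n"
  assumes "transpose M = M"
  shows "(v + e *\<^sub>R w) \<bullet> (M *v (v + e *\<^sub>R w)) =
         v \<bullet> (M *v v) + 2 * e * (w \<bullet> (M *v v)) + e\<^sup>2 * (w \<bullet> (M *v w))"
  using inner_matrix_vector_mult_sym[OF assms, of v w]
  by (simp add: matrix_vector_right_distrib matrix_vector_mult_scaleR inner_add_left
      inner_add_right algebra_simps power2_eq_square)

lemma continuous_on_quadratic_form:
  fixes M :: "real^'n^'n"
  shows "continuous_on X (\<lambda>x. x \<bullet> (M *v x))"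
  by (intro continuous_intros linear_continuous_on matrix_vector_mul_bounded_linear)

lemma linear_coeff_eq_0_if_quadratic_nonpos:
  fixes a b :: real
  assumes "\<And>e. 2 * e * b + e\<^sup>2 * a \<le> 0"
  shows "b = 0"
proof -
  define c where "c = \<bar>a\<bar> + 1"
  have c: "c > 0" "2 * c + a > 0"
    unfolding c_def by auto
  have "2 * (b / c) * b + (b / c)\<^sup>2 * a = b\<^sup>2 * (2 * c + a) / c\<^sup>2"
    using c by (simp add: field_simps power2_eq_square)
  with assms[of "b / c"] have "b\<^sup>2 * (2 * c + a) \<le> 0"
    using c by (simp add: divide_le_0_iff)
  with c show "b = 0"
    by (simp add: mult_le_0_iff)
qed

text \<open>Maximise the generalised Rayleigh quotient \<open>y \<bullet> (B *v y) / y \<bullet> (C *v y)\<close> over the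
  unit sphere of \<open>W\<close>; the quotient is invariant under scaling.\<close>
lemma rayleigh_quotient_attains_max:
  fixes B C :: "real^'n^'n"
  assumes pd: "pos_def_mat C" and W: "subspace W" and nontriv: "x \<in> W" "x \<noteq> 0"
  obtains v l where "v \<in> W" "v \<noteq> 0" "v \<bullet> (B *v v) = l * (v \<bullet> (C *v v))"
    "\<And>y. y \<in> W \<Longrightarrow> y \<bullet> (B *v y) \<le> l * (y \<bullet> (C *v y))"
proof -
  have pos: "y \<noteq> 0 \<Longrightarrow> 0 < y \<bullet> (C *v y)" for y
    using pd by (simp add: pos_def_mat_def)
  define K where "K = W \<inter> sphere 0 1"
  define g where "g y = (y \<bullet> (B *v y)) / (y \<bullet> (C *v y))" for y
  have "compact K"
    unfolding K_def using closed_subspace[OF W] by (intro closed_Int_compact) auto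
  moreover have "(1 / norm x) *\<^sub>R x \<in> K"
    unfolding K_def using nontriv W by (auto simp: subspace_scale)
  moreover have "continuous_on K g"
  proof -
    have "y \<bullet> (C *v y) \<noteq> 0" if "y \<in> K" for y
      using that pos[of y] by (force simp: K_def)
    then show ?thesis
      unfolding g_def by (intro continuous_on_divide continuous_on_quadratic_form) auto
  qed
  ultimately obtain v where vK: "v \<in> K" and vmax: "\<And>y. y \<in> K \<Longrightarrow> g y \<le> g v"
    using continuous_attains_sup[of K g] by blast
  have g_scale: "g (c *\<^sub>R y) = g y" if "c \<noteq> 0" for c y
    unfolding g_def using that by (simp add: matrix_vector_mult_scaleR)
  show thesis
  proof
    show "v \<in> W" "v \<noteq> 0"
      using vK by (auto simp: K_def)
    then show "v \<bullet> (B *v v) = g v * (v \<bullet> (C *v v))"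
      using pos[of v] by (simp add: g_def)
    show "y \<bullet> (B *v y) \<le> g v * (y \<bullet> (C *v y))" if "y \<in> W" for y
    proof (cases "y = 0")
      case False
      then have "(1 / norm y) *\<^sub>R y \<in> K"
        using that W by (auto simp: K_def subspace_scale)
      then have "g ((1 / norm y) *\<^sub>R y) \<le> g v"
        by (rule vmax)
      then have "g y \<le> g v"
        using g_scale[of "1 / norm y" y] False by simp
      then show ?thesis
        using pos[OF False] by (simp add: g_def divide_le_eq)
    qed simp
  qed
qed

text \<open>Perturbing \<open>v\<close> to \<open>v + e w\<close> inside \<open>W\<close> gives a quadratic in \<open>e\<close> that is nowhere
  positive, so its linear coefficient vanishes.\<close>
lemma rayleigh_quotient_max_stationary:
  fixes B C :: "real^'n^'n"
  assumes "transpose B = B" "transpose C = C" and W: "subspace W" "v \<in> W" "w \<in> W"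
    and max: "\<And>y. y \<in> W \<Longrightarrow> y \<bullet> (B *v y) \<le> l * (y \<bullet> (C *v y))"
    and attained: "v \<bullet> (B *v v) = l * (v \<bullet> (C *v v))"
  shows "w \<bullet> (B *v v) = l * (w \<bullet> (C *v v))"
proof -
  have "2 * e * (w \<bullet> (B *v v) - l * (w \<bullet> (C *v v)))
        + e\<^sup>2 * (w \<bullet> (B *v w) - l * (w \<bullet> (C *v w))) \<le> 0" for e
  proof -
    have "v + e *\<^sub>R w \<in> W"
      using W by (simp add: subspace_add subspace_scale)
    from max[OF this] show ?thesis
      unfolding quadratic_form_add_scaled[OF assms(1)] quadratic_form_add_scaled[OF assms(2)]
      using attained by (simp add: algebra_simps)
  qed
  then show ?thesis
    using linear_coeff_eq_0_if_quadratic_nonpos by fastforce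
qed

lemma exists_nonzero_C_orthogonal:
  fixes C :: "real^'n^'n" and u :: "'n \<Rightarrow> real^'n"
  assumes "transpose C = C" and "card F < CARD('n)"
  obtains x where "x \<noteq> 0" "\<And>j. j \<in> F \<Longrightarrow> u j \<bullet> (C *v x) = 0"
proof -
  have "dim ((\<lambda>j. C *v u j) ` F) \<le> card ((\<lambda>j. C *v u j) ` F)"
    by (rule dim_le_card) (auto simp: span_superset)
  also have "\<dots> \<le> card F"
    by (rule card_image_le) simp
  finally have "dim ((\<lambda>j. C *v u j) ` F) < DIM(real^'n)"
    using assms(2) by simp
  then obtain x where x: "x \<noteq> 0" "\<And>y. y \<in> span ((\<lambda>j. C *v u j) ` F) \<Longrightarrow> orthogonal x y"
    using orthogonal_to_subspace_exists by blast
  have "x \<bullet> (C *v u j) = 0" if "j \<in> F" for j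
    using x(2)[OF span_base] that by (simp add: orthogonal_def)
  then show thesis
    using that x(1) inner_matrix_vector_mult_sym[OF assms(1), of x] by simp
qed

text \<open>The eigenvectors of \<open>A ** C\<close> are the stationary points of the Rayleigh quotient of
  \<open>C ** A ** C\<close> relative to \<open>C\<close>; maximising it on the \<open>C\<close>-orthogonal complement of the
  known eigenvectors produces a new one.\<close>
lemma exists_C_orthogonal_eigenvector:
  fixes A C :: "real^'n^'n" and u :: "'n \<Rightarrow> real^'n" and F :: "'n set"
  assumes symA: "transpose A = A" and pd: "pos_def_mat C" and card: "card F < CARD('n)"
    and eig: "\<And>j. j \<in> F \<Longrightarrow> (A ** C) *v u j = lam j *\<^sub>R u j"
  obtains v \<mu> where "v \<noteq> 0" "\<And>j. j \<in> F \<Longrightarrow> u j \<bullet> (C *v v) = 0"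
    "(A ** C) *v v = \<mu> *\<^sub>R v"
proof -
  have symC: "transpose C = C" and pos: "\<And>x. x \<noteq> 0 \<Longrightarrow> 0 < x \<bullet> (C *v x)"
    using pd by (auto simp: pos_def_mat_def)
  define B where "B = C ** A ** C"
  have symB: "transpose B = B"
    unfolding B_def by (simp add: matrix_transpose_mul symA symC matrix_mul_assoc)
  have CAC: "C *v ((A ** C) *v y) = B *v y" for y
    by (simp add: B_def matrix_vector_mul_assoc matrix_mul_assoc)
  define W where "W = {x. \<forall>j\<in>F. u j \<bullet> (C *v x) = 0}"
  have W: "subspace W"
    by (auto simp: subspace_def W_def matrix_vector_right_distrib inner_add_right
        matrix_vector_mult_scaleR)
  obtain x where x: "x \<noteq> 0" "\<And>j. j \<in> F \<Longrightarrow> u j \<bullet> (C *v x) = 0"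
    using exists_nonzero_C_orthogonal[OF symC card] by blast
  then have "x \<in> W"
    by (simp add: W_def)
  then obtain v l where v: "v \<in> W" "v \<noteq> 0" "v \<bullet> (B *v v) = l * (v \<bullet> (C *v v))"
    and max: "\<And>y. y \<in> W \<Longrightarrow> y \<bullet> (B *v y) \<le> l * (y \<bullet> (C *v y))"
    using rayleigh_quotient_attains_max[OF pd W _ x(1)] by blast
  define z where "z = (A ** C) *v v - l *\<^sub>R v"
  have "z \<in> W"
  proof -
    have "u j \<bullet> (C *v ((A ** C) *v v)) = 0" if j: "j \<in> F" for j
    proof -
      have "u j \<bullet> (C *v ((A ** C) *v v)) = v \<bullet> (C *v ((A ** C) *v u j))"
        unfolding CAC by (rule inner_matrix_vector_mult_sym[OF symB])
      also have "\<dots> = lam j * (u j \<bullet> (C *v v))"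
        by (simp add: eig[OF j] matrix_vector_mult_scaleR inner_matrix_vector_mult_sym[OF symC])
      finally show ?thesis
        using v(1) j by (simp add: W_def)
    qed
    then show ?thesis
      using v(1) by (simp add: W_def z_def matrix_vector_mult_diff_distrib inner_diff_right
          matrix_vector_mult_scaleR)
  qed
  then have "z \<bullet> (B *v v) = l * (z \<bullet> (C *v v))"
    using rayleigh_quotient_max_stationary[OF symB symC W v(1) _ max v(3)] by blast
  then have "z \<bullet> (C *v z) = 0"
    by (simp add: z_def matrix_vector_mult_diff_distrib inner_diff_right matrix_vector_mult_scaleR CAC)
  then have "z = 0"
    using pos by force
  then show thesis
    using that v(1,2) by (simp add: W_def z_def)
qed

lemma exists_C_orthogonal_eigenbasis:
  fixes A C :: "real^'n^'n"
  assumes "transpose A = A" and "pos_def_mat C"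
  obtains u :: "'n \<Rightarrow> real^'n" and lam where "\<And>j. u j \<noteq> 0"
    "\<And>j. (A ** C) *v u j = lam j *\<^sub>R u j" "\<And>i j. i \<noteq> j \<Longrightarrow> u i \<bullet> (C *v u j) = 0"
proof -
  have C_sym: "u \<bullet> (C *v v) = v \<bullet> (C *v u)" for u v
    using assms(2) inner_matrix_vector_mult_sym by (auto simp: pos_def_mat_def)
  have "\<exists>u lam. \<forall>j\<in>F. u j \<noteq> 0 \<and> (A ** C) *v u j = lam j *\<^sub>R u j \<and>
          (\<forall>i\<in>F. i \<noteq> j \<longrightarrow> u i \<bullet> (C *v u j) = 0)" for F :: "'n set"
    using finite[of F]
  proof (induction F rule: finite_induct)
    case (insert a F)
    then obtain u lam where IH: "\<forall>j\<in>F. u j \<noteq> 0 \<and> (A ** C) *v u j = lam j *\<^sub>R u j \<and>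
          (\<forall>i\<in>F. i \<noteq> j \<longrightarrow> u i \<bullet> (C *v u j) = 0)"
      by blast
    have "card F < card (insert a F)"
      using insert by simp
    also have "\<dots> \<le> CARD('n)"
      by (rule card_mono) auto
    finally obtain v \<mu> where "v \<noteq> 0" "\<And>j. j \<in> F \<Longrightarrow> u j \<bullet> (C *v v) = 0"
      "(A ** C) *v v = \<mu> *\<^sub>R v"
      using exists_C_orthogonal_eigenvector[OF assms, of F u lam] IH by blast
    then show ?case
      using IH insert.hyps(2) C_sym
      by (intro exI[of _ "u(a := v)"] exI[of _ "lam(a := \<mu>)"]) auto
  qed simp
  from this[of UNIV] that show thesis
    by blast
qed

lemma det_trace_if_similar_diagonal:
  fixes M Q :: "real^'n^'n"
  assumes "invertible Q" and "M ** Q = Q ** (\<chi> i j. if i = j then lam i else 0)"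
  shows "det M = (\<Prod>i\<in>UNIV. lam i)" and "trace M = (\<Sum>i\<in>UNIV. lam i)"
proof -
  define \<Lambda> :: "real^'n^'n" where "\<Lambda> = (\<chi> i j. if i = j then lam i else 0)"
  have "det M * det Q = det Q * det \<Lambda>"
    using arg_cong[OF assms(2), of det] by (simp add: \<Lambda>_def det_mul)
  moreover have "det \<Lambda> = (\<Prod>i\<in>UNIV. lam i)"
    by (subst det_diagonal) (auto simp: \<Lambda>_def)
  ultimately show "det M = (\<Prod>i\<in>UNIV. lam i)"
    using assms(1) by (simp add: invertible_det_nz)
  have QQ: "Q ** matrix_inv Q = mat 1" "matrix_inv Q ** Q = mat 1"
    using matrix_mul_matrix_inv[OF assms(1)] by auto
  have "M = (M ** Q) ** matrix_inv Q"
    by (simp add: matrix_mul_assoc[symmetric] QQ(1))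
  also have "\<dots> = Q ** (\<Lambda> ** matrix_inv Q)"
    by (simp add: assms(2) \<Lambda>_def matrix_mul_assoc)
  finally have "M = Q ** (\<Lambda> ** matrix_inv Q)" .
  then have "trace M = trace ((\<Lambda> ** matrix_inv Q) ** Q)"
    using trace_mul_sym by metis
  also have "\<dots> = trace \<Lambda>"
    by (simp add: matrix_mul_assoc[symmetric] QQ(2))
  also have "\<dots> = (\<Sum>i\<in>UNIV. lam i)"
    by (simp add: trace_def \<Lambda>_def)
  finally show "trace M = (\<Sum>i\<in>UNIV. lam i)" .
qed

lemma congruence_matrix_entry:
  fixes Q C :: "real^'n^'n"
  shows "(transpose Q ** C ** Q) $ i $ j = column i Q \<bullet> (C *v column j Q)"
proof -
  have "(transpose Q ** C ** Q) $ i $ j = (\<Sum>l\<in>UNIV. \<Sum>k\<in>UNIV. Q $ k $ i * C $ k $ l * Q $ l $ j)"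
    by (simp add: matrix_matrix_mult_def transpose_def sum_distrib_right)
  also have "\<dots> = (\<Sum>k\<in>UNIV. \<Sum>l\<in>UNIV. Q $ k $ i * C $ k $ l * Q $ l $ j)"
    by (rule sum.swap)
  also have "\<dots> = column i Q \<bullet> (C *v column j Q)"
    by (simp add: inner_vec_def matrix_vector_mult_def column_def sum_distrib_left mult.assoc)
  finally show ?thesis .
qed

lemma eigenvalue_pos_semidef_mult_pos_def_nonneg:
  fixes A C :: "real^'n^'n"
  assumes psd: "pos_semidef_mat A" and pd: "pos_def_mat C"
    and eig: "u \<noteq> 0" "(A ** C) *v u = lam *\<^sub>R u"
  shows "0 \<le> lam"
proof -
  have symC: "transpose C = C" and pos: "0 < u \<bullet> (C *v u)"
    using pd eig(1) by (auto simp: pos_def_mat_def)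
  have "lam * (u \<bullet> (C *v u)) = (A *v (C *v u)) \<bullet> (C *v u)"
    using eig(2) inner_matrix_vector_mult_sym[OF symC, of u "A *v (C *v u)"]
    by (simp add: matrix_vector_mult_scaleR matrix_vector_mul_assoc)
  also have "\<dots> \<ge> 0"
    using psd by (simp add: pos_semidef_mat_def inner_commute)
  finally show ?thesis
    using pos by (simp add: zero_le_mult_iff)
qed

lemma pos_semidef_mult_pos_def_eigenvalues:
  fixes A C :: "real^'n^'n"
  assumes psd: "pos_semidef_mat A" and pd: "pos_def_mat C"
  obtains lam :: "'n \<Rightarrow> real" where "\<And>i. 0 \<le> lam i"
    "det (A ** C) = (\<Prod>i\<in>UNIV. lam i)" "trace (A ** C) = (\<Sum>i\<in>UNIV. lam i)"
proof -
  have symA: "transpose A = A" and pos: "\<And>x. x \<noteq> 0 \<Longrightarrow> 0 < x \<bullet> (C *v x)"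
    using psd pd by (auto simp: pos_semidef_mat_def pos_def_mat_def)
  obtain u :: "'n \<Rightarrow> real^'n" and lam where u: "\<And>j. u j \<noteq> 0"
    "\<And>j. (A ** C) *v u j = lam j *\<^sub>R u j" "\<And>i j. i \<noteq> j \<Longrightarrow> u i \<bullet> (C *v u j) = 0"
    using exists_C_orthogonal_eigenbasis[OF symA pd] by blast
  define Q :: "real^'n^'n" where "Q = (\<chi> i j. u j $ i)"
  have "column j Q = u j" for j
    by (simp add: column_def Q_def vec_eq_iff)
  then have "det (transpose Q ** C ** Q) = (\<Prod>i\<in>UNIV. u i \<bullet> (C *v u i))"
    by (subst det_diagonal) (auto simp: congruence_matrix_entry u(3))
  also have "\<dots> \<noteq> 0"
    using pos u(1) by (simp add: less_imp_neq[symmetric])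
  finally have "invertible Q"
    by (simp add: det_mul invertible_det_nz)
  moreover have "(A ** C) ** Q = Q ** (\<chi> i j. if i = j then lam i else 0)"
  proof -
    have "((A ** C) ** Q) $ i $ j = ((A ** C) *v u j) $ i" for i j
      by (simp add: matrix_matrix_mult_def matrix_vector_mult_def Q_def)
    moreover have "(Q ** (\<chi> i j. if i = j then lam i else 0)) $ i $ j = lam j * u j $ i" for i j
      by (simp add: matrix_matrix_mult_def Q_def if_distrib cong: if_cong)
    ultimately show ?thesis
      by (simp add: vec_eq_iff u(2) mult.commute)
  qed
  ultimately have "det (A ** C) = (\<Prod>i\<in>UNIV. lam i)" "trace (A ** C) = (\<Sum>i\<in>UNIV. lam i)"
    by (rule det_trace_if_similar_diagonal)+
  moreover have "0 \<le> lam i" for i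
    using eigenvalue_pos_semidef_mult_pos_def_nonneg[OF psd pd u(1,2)] .
  ultimately show thesis
    using that by blast
qed

lemma prod_le_mean_power:
  fixes x :: "'i \<Rightarrow> real"
  assumes "finite I" "I \<noteq> {}" "\<And>i. i \<in> I \<Longrightarrow> 0 \<le> x i"
  shows "(\<Prod>i\<in>I. x i) \<le> ((\<Sum>i\<in>I. x i) / card I) ^ card I"
proof -
  have card: "card I > 0"
    using assms(1,2) by (simp add: card_gt_0_iff)
  have prod: "0 \<le> (\<Prod>i\<in>I. x i)"
    using assms(3) by (simp add: prod_nonneg)
  have "(\<Prod>i\<in>I. x i) = ((\<Prod>i\<in>I. x i) powr (1 / card I)) ^ card I"
  proof (cases "(\<Prod>i\<in>I. x i) = 0")
    case False
    then show ?thesis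
      using prod card by (simp add: powr_realpow[symmetric] powr_powr)
  qed (use card in simp)
  also have "\<dots> \<le> (\<Sum>i\<in>I. x i / card I) ^ card I"
    by (intro power_mono arith_geom_mean assms) auto
  finally show ?thesis
    by (simp add: sum_divide_distrib)
qed

lemma det_mult_pos_def_bounds:
  fixes A C :: "real^'n^'n"
  assumes "pos_semidef_mat A" and "pos_def_mat C"
  shows "0 \<le> det (A ** C)" and "det (A ** C) \<le> (trace (A ** C) / CARD('n)) ^ CARD('n)"
proof -
  obtain lam :: "'n \<Rightarrow> real" where "\<And>i. 0 \<le> lam i"
    "det (A ** C) = (\<Prod>i\<in>UNIV. lam i)" "trace (A ** C) = (\<Sum>i\<in>UNIV. lam i)"
    using pos_semidef_mult_pos_def_eigenvalues[OF assms] by blast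
  then show "0 \<le> det (A ** C)" and "det (A ** C) \<le> (trace (A ** C) / CARD('n)) ^ CARD('n)"
    using prod_le_mean_power[of UNIV lam] by (simp_all add: prod_nonneg)
qed

section \<open>The rescaled covariance\<close>

definition lev_rescale :: "real^'n^'n \<Rightarrow> real^'n \<Rightarrow> real^'n" where
  "lev_rescale S x = (sqrt (real CARD('n)) / sqrt (lev_score S x)) *\<^sub>R x"

lemma rescaled_cov_component:
  "rescaled_cov S t xs $ i $ j =
     1 / real t * (\<Sum>k<t. lev_rescale S (xs k) $ i * lev_rescale S (xs k) $ j)"
  by (simp add: rescaled_cov_def outer_def lev_rescale_def sum_distrib_left)

lemma quadratic_form_expand:
  fixes L :: "real^'n^'n"
  shows "x \<bullet> (L *v x) = (\<Sum>i\<in>UNIV. \<Sum>j\<in>UNIV. L $ i $ j * (x $ i * x $ j))"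
  by (simp add: inner_vec_def matrix_vector_mult_def sum_distrib_left algebra_simps)

lemma quadratic_form_gram:
  fixes M :: "real^'n^'n" and w :: "'k \<Rightarrow> real^'n"
  assumes "\<And>i j. M $ i $ j = c * (\<Sum>k\<in>K. w k $ i * w k $ j)"
  shows "x \<bullet> (M *v x) = c * (\<Sum>k\<in>K. (x \<bullet> w k)\<^sup>2)"
proof -
  have "x \<bullet> (M *v x) = (\<Sum>i\<in>UNIV. x $ i * (\<Sum>j\<in>UNIV. (c * (\<Sum>k\<in>K. w k $ i * w k $ j)) * x $ j))"
    by (simp add: inner_vec_def matrix_vector_mult_def assms)
  also have "\<dots> = c * (\<Sum>i\<in>UNIV. \<Sum>j\<in>UNIV. \<Sum>k\<in>K. (x $ i * w k $ i) * (x $ j * w k $ j))"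
    by (simp add: sum_distrib_left sum_distrib_right algebra_simps)
  also have "\<dots> = c * (\<Sum>k\<in>K. \<Sum>i\<in>UNIV. \<Sum>j\<in>UNIV. (x $ i * w k $ i) * (x $ j * w k $ j))"
    by (simp add: sum.swap[of _ K])
  also have "\<dots> = c * (\<Sum>k\<in>K. (x \<bullet> w k)\<^sup>2)"
    by (simp add: inner_vec_def power2_eq_square sum_product)
  finally show ?thesis .
qed

lemma trace_gram_mult:
  fixes M L :: "real^'n^'n" and w :: "'k \<Rightarrow> real^'n"
  assumes "\<And>i j. M $ i $ j = c * (\<Sum>k\<in>K. w k $ i * w k $ j)"
  shows "trace (M ** L) = c * (\<Sum>k\<in>K. w k \<bullet> (L *v w k))"
proof -
  have "trace (M ** L) = (\<Sum>i\<in>UNIV. \<Sum>j\<in>UNIV. (c * (\<Sum>k\<in>K. w k $ i * w k $ j)) * L $ j $ i)"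
    by (simp add: trace_def matrix_matrix_mult_def assms)
  also have "\<dots> = c * (\<Sum>i\<in>UNIV. \<Sum>j\<in>UNIV. \<Sum>k\<in>K. (L $ j $ i * w k $ j) * w k $ i)"
    by (simp add: sum_distrib_left sum_distrib_right algebra_simps)
  also have "\<dots> = c * (\<Sum>k\<in>K. \<Sum>i\<in>UNIV. \<Sum>j\<in>UNIV. (L $ j $ i * w k $ j) * w k $ i)"
    by (simp add: sum.swap[of _ K])
  also have "\<dots> = c * (\<Sum>k\<in>K. (w k v* L) \<bullet> w k)"
    by (simp add: inner_vec_def vector_matrix_mult_def sum_distrib_left sum_distrib_right mult.commute mult.left_commute)
  also have "\<dots> = c * (\<Sum>k\<in>K. w k \<bullet> (L *v w k))"
    by (simp add: dot_lmul_matrix)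
  finally show ?thesis .
qed

lemma lev_score_scaleR: "lev_score S (c *\<^sub>R x) = c\<^sup>2 * lev_score S x"
  by (simp add: lev_score_def matrix_vector_mult_scaleR power2_eq_square)

lemma lev_score_nonneg: "pos_def_mat S \<Longrightarrow> 0 \<le> lev_score S x"
  using pos_def_mat_matrix_inv pos_def_mat_imp_pos_semidef_mat
  by (auto simp: lev_score_def pos_semidef_mat_def)

lemma lev_score_eq_0_iff: "pos_def_mat S \<Longrightarrow> lev_score S x = 0 \<longleftrightarrow> x = 0"
  using pos_def_mat_matrix_inv[of S] by (force simp: lev_score_def pos_def_mat_def)

lemma lev_score_lev_rescale:
  fixes S :: "real^'n^'n"
  assumes "pos_def_mat S"
  shows "lev_score S (lev_rescale S x) = (if x = 0 then 0 else real CARD('n))"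
  using lev_score_nonneg[OF assms, of x] lev_score_eq_0_iff[OF assms, of x]
  by (simp add: lev_rescale_def lev_score_scaleR power_divide)

lemma pos_semidef_rescaled_cov: "pos_semidef_mat (rescaled_cov S t xs)"
  unfolding pos_semidef_mat_def
proof
  show "transpose (rescaled_cov S t xs) = rescaled_cov S t xs"
    by (simp add: vec_eq_iff transpose_def rescaled_cov_component mult.commute)
  show "\<forall>x. 0 \<le> x \<bullet> (rescaled_cov S t xs *v x)"
    by (simp add: quadratic_form_gram[OF rescaled_cov_component] sum_nonneg)
qed

lemma trace_rescaled_cov_mult_bounds:
  fixes S :: "real^'n^'n"
  assumes "pos_def_mat S"
  shows "0 \<le> trace (rescaled_cov S t xs ** matrix_inv S)"
    and "trace (rescaled_cov S t xs ** matrix_inv S) \<le> real CARD('n)"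
proof -
  have tr: "trace (rescaled_cov S t xs ** matrix_inv S) =
      (\<Sum>k<t. lev_score S (lev_rescale S (xs k))) / real t"
    unfolding lev_score_def by (simp add: trace_gram_mult[OF rescaled_cov_component])
  have "(\<Sum>k<t. lev_score S (lev_rescale S (xs k))) \<le> real t * real CARD('n)"
    using sum_mono[of "{..<t}" "\<lambda>k. lev_score S (lev_rescale S (xs k))" "\<lambda>_. real CARD('n)"]
    by (simp add: lev_score_lev_rescale[OF assms])
  then show "trace (rescaled_cov S t xs ** matrix_inv S) \<le> real CARD('n)"
    unfolding tr by (cases "t = 0") (simp_all add: divide_le_eq mult.commute)
  show "0 \<le> trace (rescaled_cov S t xs ** matrix_inv S)"
    unfolding tr by (simp add: sum_nonneg lev_score_lev_rescale[OF assms])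
qed

lemma det_rescaled_cov_mult_le_one:
  fixes S :: "real^'n^'n"
  assumes "pos_def_mat S"
  shows "det (rescaled_cov S t xs ** matrix_inv S) \<le> 1"
proof -
  have "det (rescaled_cov S t xs ** matrix_inv S)
      \<le> (trace (rescaled_cov S t xs ** matrix_inv S) / CARD('n)) ^ CARD('n)"
    by (rule det_mult_pos_def_bounds(2)[OF pos_semidef_rescaled_cov pos_def_mat_matrix_inv[OF assms]])
  also have "\<dots> \<le> 1"
    using trace_rescaled_cov_mult_bounds[OF assms] by (intro power_le_one) simp_all
  finally show ?thesis .
qed

lemma det_rows_sum:
  fixes r :: "'n::finite \<Rightarrow> 'k \<Rightarrow> real^'n"
  assumes "finite K"
  shows "det (\<chi> i. \<Sum>k\<in>K. r i k) = (\<Sum>f\<in>UNIV \<rightarrow>\<^sub>E K. det (\<chi> i. r i (f i)))"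
proof -
  have "det (\<chi> i. \<Sum>k\<in>K. r i k) =
      (\<Sum>p | p permutes UNIV. of_int (sign p) * (\<Sum>f\<in>UNIV \<rightarrow>\<^sub>E K. \<Prod>i\<in>UNIV. r i (f i) $ p i))"
    unfolding det_def using assms by (simp add: sum_component prod_sum_PiE)
  also have "\<dots> = (\<Sum>f\<in>UNIV \<rightarrow>\<^sub>E K. \<Sum>p | p permutes UNIV. of_int (sign p) * (\<Prod>i\<in>UNIV. r i (f i) $ p i))"
    by (simp add: sum_distrib_left sum.swap[where B = "UNIV \<rightarrow>\<^sub>E K"])
  also have "\<dots> = (\<Sum>f\<in>UNIV \<rightarrow>\<^sub>E K. det (\<chi> i. r i (f i)))"
    by (simp add: det_def)
  finally show ?thesis .
qed

lemma det_rows_sum_eq_sum_inj: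
  fixes c :: "'n::finite \<Rightarrow> 'k \<Rightarrow> real" and v :: "'k \<Rightarrow> real^'n"
  assumes "finite K"
  shows "det (\<chi> i. \<Sum>k\<in>K. c i k *s v k) =
    (\<Sum>f | f \<in> UNIV \<rightarrow>\<^sub>E K \<and> inj f. det (\<chi> i. c i (f i) *s v (f i)))"
  unfolding det_rows_sum[OF assms]
proof (rule sum.mono_neutral_right)
  show "finite ((UNIV :: 'n set) \<rightarrow>\<^sub>E K)"
    using assms by (intro finite_PiE) auto
  show "\<forall>f\<in>(UNIV \<rightarrow>\<^sub>E K) - {f. f \<in> UNIV \<rightarrow>\<^sub>E K \<and> inj f}. det (\<chi> i. c i (f i) *s v (f i)) = 0"
  proof
    fix f :: "'n \<Rightarrow> 'k"
    assume "f \<in> (UNIV \<rightarrow>\<^sub>E K) - {f. f \<in> UNIV \<rightarrow>\<^sub>E K \<and> inj f}"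
    then obtain i j where "i \<noteq> j" "f i = f j"
      by (auto simp: inj_def)
    then have "det (\<chi> i. v (f i)) = 0"
      by (intro det_identical_rows[of i j]) (simp_all add: row_def vec_lambda_eta)
    then show "det (\<chi> i. c i (f i) *s v (f i)) = 0"
      by (simp add: det_rows_mul)
  qed
qed auto

lemma det_scaled_entries:
  fixes A :: "real^'n^'n"
  shows "det (\<chi> i j. c * A $ i $ j) = c ^ CARD('n) * det A"
proof -
  have "(\<chi> i j. c * A $ i $ j) = (\<chi> i. c *s A $ i)"
    by (simp add: vec_eq_iff)
  then show ?thesis
    by (simp add: det_rows_mul prod_constant)
qed

lemma rescaled_cov_eq_rows_sum:
  "rescaled_cov S t xs =
     (\<chi> i. \<Sum>k<t. (lev_rescale S (xs k) $ i / real t) *s lev_rescale S (xs k))"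
  by (simp add: vec_eq_iff rescaled_cov_component sum_distrib_left)

lemma det_rescaled_cov_eq_sum_inj:
  "det (rescaled_cov S t xs) = (\<Sum>f | f \<in> UNIV \<rightarrow>\<^sub>E {..<t} \<and> inj f.
     det (\<chi> i j. lev_rescale S (xs (f i)) $ i * lev_rescale S (xs (f i)) $ j / real t))"
  unfolding rescaled_cov_eq_rows_sum det_rows_sum_eq_sum_inj[OF finite_lessThan]
  by (intro sum.cong refl arg_cong[of _ _ det]) (simp add: vec_eq_iff)

section \<open>Expected determinants with independent rows\<close>

lemma integral_prod_injective_coordinates:
  fixes N :: "'b measure" and f :: "'k::finite \<Rightarrow> 'i" and h :: "'k \<Rightarrow> 'b \<Rightarrow> real"
  assumes N: "prob_space N" and I: "finite I" and f: "inj f" "range f \<subseteq> I"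
    and int: "\<And>k. integrable N (h k)"
  shows "integrable (PiM I (\<lambda>_. N)) (\<lambda>xs. \<Prod>k\<in>UNIV. h k (xs (f k)))"
    and "(\<integral>xs. (\<Prod>k\<in>UNIV. h k (xs (f k))) \<partial>PiM I (\<lambda>_. N)) = (\<Prod>k\<in>UNIV. \<integral>x. h k x \<partial>N)"
proof -
  interpret product_sigma_finite "\<lambda>_. N"
    by (simp add: product_sigma_finite_def prob_space_imp_sigma_finite N)
  interpret N: prob_space N
    by (rule N)
  text \<open>\<open>product_integral_prod\<close> needs a factor for every coordinate in \<open>I\<close>.\<close>
  define H where "H i = (if i \<in> range f then h (inv f i) else (\<lambda>_. 1))" for i
  have reindex: "(\<Prod>i\<in>I. G i) = (\<Prod>k\<in>UNIV. G (f k))" if "\<And>i. i \<notin> range f \<Longrightarrow> G i = 1"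
    for G :: "'i \<Rightarrow> real"
  proof -
    have "(\<Prod>i\<in>I. G i) = (\<Prod>i\<in>range f. G i)"
      using I f(2) that by (intro prod.mono_neutral_right) auto
    also have "\<dots> = (\<Prod>k\<in>UNIV. G (f k))"
      using f(1) by (simp add: prod.reindex)
    finally show ?thesis .
  qed
  have eq: "(\<Prod>k\<in>UNIV. h k (xs (f k))) = (\<Prod>i\<in>I. H i (xs i))" for xs
    by (subst reindex) (auto simp: H_def inv_f_f[OF f(1)])
  have intH: "integrable N (H i)" for i
    by (simp add: H_def int)
  show "integrable (PiM I (\<lambda>_. N)) (\<lambda>xs. \<Prod>k\<in>UNIV. h k (xs (f k)))"
    unfolding eq using I intH by (intro product_integrable_prod) auto
  have "(\<integral>xs. (\<Prod>k\<in>UNIV. h k (xs (f k))) \<partial>PiM I (\<lambda>_. N)) = (\<Prod>i\<in>I. \<integral>x. H i x \<partial>N)"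
    unfolding eq using I intH by (intro product_integral_prod) auto
  also have "\<dots> = (\<Prod>k\<in>UNIV. \<integral>x. h k x \<partial>N)"
    by (subst reindex) (simp_all add: H_def inv_f_f[OF f(1)] N.prob_space)
  finally show "(\<integral>xs. (\<Prod>k\<in>UNIV. h k (xs (f k))) \<partial>PiM I (\<lambda>_. N)) = (\<Prod>k\<in>UNIV. \<integral>x. h k x \<partial>N)" .
qed

text \<open>Each term of the Leibniz formula is a product over distinct, hence independent,
  coordinates.\<close>
lemma integral_det_independent_rows:
  fixes N :: "'b measure" and f :: "'n::finite \<Rightarrow> 'i" and g :: "'n \<Rightarrow> 'n \<Rightarrow> 'b \<Rightarrow> real"
  assumes N: "prob_space N" and I: "finite I" and f: "inj f" "range f \<subseteq> I"
    and int: "\<And>i j. integrable N (g i j)"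
  shows "integrable (PiM I (\<lambda>_. N)) (\<lambda>xs. det (\<chi> i j. g i j (xs (f i))))"
    and "(\<integral>xs. det (\<chi> i j. g i j (xs (f i))) \<partial>PiM I (\<lambda>_. N)) = det (\<chi> i j. \<integral>x. g i j x \<partial>N)"
proof -
  note prod_int = integral_prod_injective_coordinates[OF N I f, of "\<lambda>i. g i (p i)" for p]
  show "integrable (PiM I (\<lambda>_. N)) (\<lambda>xs. det (\<chi> i j. g i j (xs (f i))))"
    unfolding det_def using prod_int(1) int by simp
  show "(\<integral>xs. det (\<chi> i j. g i j (xs (f i))) \<partial>PiM I (\<lambda>_. N)) = det (\<chi> i j. \<integral>x. g i j x \<partial>N)"
    unfolding det_def using prod_int int by (simp add: Bochner_Integration.integral_sum)
qed

section \<open>Leverage score sampling\<close>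

lemma borel_measurable_vec_nth [measurable]: "(\<lambda>x::real^'n. x $ i) \<in> borel_measurable borel"
  by (intro borel_measurable_continuous_onI linear_continuous_on bounded_linear_vec_nth)

lemma borel_measurable_lev_score [measurable]: "lev_score S \<in> borel_measurable borel"
  unfolding lev_score_def by (intro borel_measurable_continuous_onI continuous_on_quadratic_form)

lemma one_minus_sq_div_le_prod:
  assumes "d \<le> t"
  shows "1 - (real d)\<^sup>2 / real t \<le> (\<Prod>k<d. 1 - real k / real t)"
proof -
  have "1 - (real d)\<^sup>2 / real t \<le> 1 - (\<Sum>k<d. real k / real t)"
    using sum_mono[of "{..<d}" "\<lambda>k. real k / real t" "\<lambda>_. real d / real t"]
    by (simp add: divide_right_mono power2_eq_square)
  also have "\<dots> \<le> (\<Prod>k<d. 1 - real k / real t)"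
    using assms by (intro Weierstrass_prod_ineq) (auto simp: field_simps)
  finally show ?thesis .
qed

lemma card_injective_funcset:
  assumes "CARD('n) \<le> t"
  shows "real (card {f :: 'n::finite \<Rightarrow> nat. f \<in> UNIV \<rightarrow>\<^sub>E {..<t} \<and> inj f}) =
    (\<Prod>k<CARD('n). real t - real k)"
proof -
  have "card {f :: 'n \<Rightarrow> nat. f \<in> UNIV \<rightarrow>\<^sub>E {..<t} \<and> inj f} = (\<Prod>k<CARD('n). t - k)"
    using card_inj_on_subset_funcset[of "UNIV :: 'n set" "{..<t}" UNIV]
    by (simp add: atLeast0LessThan)
  then show ?thesis
    using assms by simp
qed

locale second_moment_space = prob_space D
  for D :: "(real^'n) measure" +
  assumes sets_D [measurable_cong]: "sets D = sets borel"
    and integrable_norm_sq: "integrable D (\<lambda>x. (norm x)\<^sup>2)"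
begin

lemma integrable_component_mult: "integrable D (\<lambda>x. x $ i * x $ j)"
proof (rule Bochner_Integration.integrable_bound[OF integrable_norm_sq])
  show "AE x in D. norm (x $ i * x $ j) \<le> norm ((norm x)\<^sup>2)"
    using mult_mono[OF component_le_norm_cart component_le_norm_cart]
    by (intro AE_I2) (simp add: abs_mult power2_eq_square)
qed measurable

lemma integrable_quadratic_form: "integrable D (\<lambda>x. x \<bullet> (L *v x))"
  unfolding quadratic_form_expand by (simp add: integrable_component_mult)

lemma trace_second_moment_mult: "trace (second_moment D ** L) = (\<integral>x. x \<bullet> (L *v x) \<partial>D)"
proof -
  have "trace (second_moment D ** L) =
      (\<Sum>i\<in>UNIV. \<Sum>j\<in>UNIV. transpose L $ i $ j * (\<integral>x. x $ i * x $ j \<partial>D))"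
    by (simp add: trace_def matrix_matrix_mult_def second_moment_def transpose_def mult.commute)
  also have "\<dots> = (\<integral>x. x \<bullet> (transpose L *v x) \<partial>D)"
    unfolding quadratic_form_expand using integrable_component_mult by simp
  also have "\<dots> = (\<integral>x. x \<bullet> (L *v x) \<partial>D)"
    by (metis dot_lmul_matrix inner_commute transpose_matrix_vector)
  finally show ?thesis .
qed

lemma pos_semidef_second_moment: "pos_semidef_mat (second_moment D)"
  unfolding pos_semidef_mat_def
proof
  show "transpose (second_moment D) = second_moment D"
    by (simp add: vec_eq_iff transpose_def second_moment_def mult.commute)
  show "\<forall>v. 0 \<le> v \<bullet> (second_moment D *v v)"
  proof
    fix v :: "real^'n"
    have "v \<bullet> (second_moment D *v v) =
        (\<Sum>i\<in>UNIV. \<Sum>j\<in>UNIV. (v $ i * v $ j) * (\<integral>x. x $ i * x $ j \<partial>D))"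
      by (simp add: quadratic_form_expand second_moment_def mult.commute)
    also have "\<dots> = (\<integral>x. (\<Sum>i\<in>UNIV. \<Sum>j\<in>UNIV. (v $ i * v $ j) * (x $ i * x $ j)) \<partial>D)"
      using integrable_component_mult by simp
    also have "\<dots> = (\<integral>x. (v \<bullet> x)\<^sup>2 \<partial>D)"
      by (simp add: inner_vec_def power2_eq_square sum_product algebra_simps)
    also have "\<dots> \<ge> 0"
      by simp
    finally show "0 \<le> v \<bullet> (second_moment D *v v)" .
  qed
qed

end

locale leverage_sampling = second_moment_space D
  for D :: "(real^'n) measure" +
  fixes S :: "real^'n^'n"
  assumes pos_def_S: "pos_def_mat S"
    and invertible_second_moment: "invertible (second_moment D)"
begin

abbreviation total_lev :: real where
  "total_lev \<equiv> trace (second_moment D ** matrix_inv S)"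

lemma total_lev_eq_integral: "total_lev = (\<integral>x. lev_score S x \<partial>D)"
  unfolding lev_score_def by (rule trace_second_moment_mult)

lemma total_lev_pos: "0 < total_lev"
proof -
  have nonneg: "AE x in D. 0 \<le> lev_score S x"
    using lev_score_nonneg[OF pos_def_S] by simp
  have "total_lev \<noteq> 0"
  proof
    assume "total_lev = 0"
    then have "AE x in D. lev_score S x = 0"
      using integral_nonneg_eq_0_iff_AE[OF _ nonneg] integrable_quadratic_form
      by (simp add: total_lev_eq_integral lev_score_def)
    then have "AE x in D. x = 0"
      using lev_score_eq_0_iff[OF pos_def_S] by simp
    then have "(\<integral>x. x $ i * x $ j \<partial>D) = 0" for i j
      by (intro integral_eq_zero_AE) (auto elim: AE_mp)
    then have "second_moment D = mat 0"
      by (simp add: second_moment_def vec_eq_iff mat_def)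
    then have "det (second_moment D) = 0"
      by (simp only: det_0)
    then show False
      using invertible_second_moment by (simp add: invertible_det_nz)
  qed
  moreover have "0 \<le> total_lev"
    using nonneg by (simp add: total_lev_eq_integral integral_nonneg_AE)
  ultimately show ?thesis
    by simp
qed

lemma prob_space_lev_measure: "prob_space (lev_measure S D)"
proof
  have "emeasure (lev_measure S D) (space (lev_measure S D)) =
      (\<integral>\<^sup>+ x. ennreal (lev_score S x / total_lev) \<partial>D)"
  proof -
    have "(\<lambda>x. lev_score S x / total_lev) \<in> borel_measurable D"
      by measurable
    then show ?thesis
      unfolding lev_measure_def by (simp add: emeasure_density)
  qed
  also have "\<dots> = ennreal (\<integral>x. lev_score S x / total_lev \<partial>D)"
    using integrable_quadratic_form lev_score_nonneg[OF pos_def_S] total_lev_pos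
    by (intro nn_integral_eq_integral) (auto simp: lev_score_def)
  also have "(\<integral>x. lev_score S x / total_lev \<partial>D) = 1"
    using total_lev_pos by (simp add: total_lev_eq_integral[symmetric])
  finally show "emeasure (lev_measure S D) (space (lev_measure S D)) = 1"
    by simp
qed

text \<open>The leverage density cancels the normalisation of the rescaled samples, which is why
  the leverage distribution makes the rescaled covariance an unbiased multiple of the
  second moment.\<close>
lemma lev_density_mult_lev_rescale:
  "lev_score S x / total_lev * (lev_rescale S x $ i * lev_rescale S x $ j) =
     real CARD('n) / total_lev * (x $ i * x $ j)"
proof (cases "x = 0")
  case False
  then have pos: "lev_score S x > 0"
    using lev_score_nonneg[OF pos_def_S, of x] lev_score_eq_0_iff[OF pos_def_S, of x] by simp
  have "lev_rescale S x $ i * lev_rescale S x $ j =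
      (sqrt (real CARD('n)) / sqrt (lev_score S x))\<^sup>2 * (x $ i * x $ j)"
    by (simp add: lev_rescale_def power2_eq_square algebra_simps)
  also have "(sqrt (real CARD('n)) / sqrt (lev_score S x))\<^sup>2 = real CARD('n) / lev_score S x"
    using pos by (simp add: power_divide)
  finally show ?thesis
    using pos by simp
qed (simp add: lev_rescale_def)

lemma integrable_lev_rescale_component_mult:
  "integrable (lev_measure S D) (\<lambda>x. lev_rescale S x $ i * lev_rescale S x $ j)"
  and integral_lev_rescale_component_mult:
  "(\<integral>x. lev_rescale S x $ i * lev_rescale S x $ j \<partial>lev_measure S D) =
     real CARD('n) / total_lev * second_moment D $ i $ j"
proof -
  have density: "(\<lambda>x. lev_score S x / total_lev) \<in> borel_measurable D"
    "AE x in D. 0 \<le> lev_score S x / total_lev"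
    using lev_score_nonneg[OF pos_def_S] total_lev_pos by auto
  have meas: "(\<lambda>x. lev_rescale S x $ i * lev_rescale S x $ j) \<in> borel_measurable D"
    unfolding lev_rescale_def by measurable
  have eq: "(\<lambda>x. (lev_score S x / total_lev) *\<^sub>R (lev_rescale S x $ i * lev_rescale S x $ j)) =
      (\<lambda>x. real CARD('n) / total_lev * (x $ i * x $ j))"
    by (simp only: real_scaleR_def lev_density_mult_lev_rescale)
  show "integrable (lev_measure S D) (\<lambda>x. lev_rescale S x $ i * lev_rescale S x $ j)"
    unfolding lev_measure_def integrable_density[OF meas density] eq
    using integrable_component_mult by simp
  show "(\<integral>x. lev_rescale S x $ i * lev_rescale S x $ j \<partial>lev_measure S D) =
     real CARD('n) / total_lev * second_moment D $ i $ j"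
    unfolding lev_measure_def integral_density[OF meas density] eq
    by (simp add: second_moment_def)
qed

lemma integral_det_rescaled_cov:
  "integrable (PiM {..<t} (\<lambda>_. lev_measure S D)) (\<lambda>xs. det (rescaled_cov S t xs))"
  "(\<integral>xs. det (rescaled_cov S t xs) \<partial>PiM {..<t} (\<lambda>_. lev_measure S D)) =
     real (card {f :: 'n \<Rightarrow> nat. f \<in> UNIV \<rightarrow>\<^sub>E {..<t} \<and> inj f}) *
     ((real CARD('n) / (real t * total_lev)) ^ CARD('n) * det (second_moment D))"
proof -
  let ?P = "PiM {..<t} (\<lambda>_. lev_measure S D)"
  let ?I = "{f :: 'n \<Rightarrow> nat. f \<in> UNIV \<rightarrow>\<^sub>E {..<t} \<and> inj f}"
  let ?g = "\<lambda>i j x. lev_rescale S x $ i * lev_rescale S x $ j / real t"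
  have g_int: "integrable (lev_measure S D) (?g i j)" for i j
    using integrable_lev_rescale_component_mult by simp
  have "(\<chi> i j. \<integral>x. ?g i j x \<partial>lev_measure S D) =
      (\<chi> i j. real CARD('n) / (real t * total_lev) * second_moment D $ i $ j)"
    by (simp add: integral_lev_rescale_component_mult vec_eq_iff)
  then have g_det: "det (\<chi> i j. \<integral>x. ?g i j x \<partial>lev_measure S D) =
      (real CARD('n) / (real t * total_lev)) ^ CARD('n) * det (second_moment D)"
    by (simp only: det_scaled_entries)
  have f: "inj f" "range f \<subseteq> {..<t}" if "f \<in> ?I" for f
    using that by (auto simp: PiE_def Pi_def)
  have rows: "integrable ?P (\<lambda>xs. det (\<chi> i j. ?g i j (xs (f i))))"
    "(\<integral>xs. det (\<chi> i j. ?g i j (xs (f i))) \<partial>?P) =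
       (real CARD('n) / (real t * total_lev)) ^ CARD('n) * det (second_moment D)"
    if "f \<in> ?I" for f
    using integral_det_independent_rows[OF prob_space_lev_measure finite_lessThan f[OF that], of ?g]
      g_int g_det by simp_all
  have fin: "finite ?I"
    by (rule finite_subset[of _ "UNIV \<rightarrow>\<^sub>E {..<t}"]) (auto intro: finite_PiE)
  show "integrable ?P (\<lambda>xs. det (rescaled_cov S t xs))"
    unfolding det_rescaled_cov_eq_sum_inj using rows(1) by auto
  have "(\<integral>xs. det (rescaled_cov S t xs) \<partial>?P) = (\<Sum>f\<in>?I. \<integral>xs. det (\<chi> i j. ?g i j (xs (f i))) \<partial>?P)"
    unfolding det_rescaled_cov_eq_sum_inj using rows(1) by (simp add: Bochner_Integration.integral_sum)
  also have "\<dots> = (\<Sum>f\<in>?I. (real CARD('n) / (real t * total_lev)) ^ CARD('n) * det (second_moment D))"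
    using rows(2) by (intro sum.cong) auto
  finally show "(\<integral>xs. det (rescaled_cov S t xs) \<partial>?P) =
     real (card ?I) * ((real CARD('n) / (real t * total_lev)) ^ CARD('n) * det (second_moment D))"
    by simp
qed

lemma integral_det_rescaled_cov_mult:
  assumes "CARD('n) \<le> t"
  shows "(\<integral>xs. det (rescaled_cov S t xs ** matrix_inv S) \<partial>PiM {..<t} (\<lambda>_. lev_measure S D)) =
    (\<Prod>k<CARD('n). 1 - real k / real t) *
    (det (second_moment D ** matrix_inv S) / ((1 / real CARD('n)) * total_lev) ^ CARD('n))"
proof -
  have t: "0 < real t"
    using assms by (metis of_nat_0_less_iff order.strict_trans2 zero_less_card_finite)
  have "(\<Prod>k<CARD('n). 1 - real k / real t) = (\<Prod>k<CARD('n). (real t - real k) / real t)"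
    using t by (intro prod.cong) (auto simp: field_simps)
  also have "\<dots> = (\<Prod>k<CARD('n). real t - real k) / real t ^ CARD('n)"
    by (simp add: prod_dividef)
  finally show ?thesis
    using total_lev_pos t
    by (simp add: det_mul integral_det_rescaled_cov card_injective_funcset[OF assms]
        power_divide power_mult_distrib field_simps)
qed

end

theorem lemma5:
  fixes D :: "(real^'n) measure" and S :: "real^'n^'n" and t :: nat
  assumes "prob_space D"
    and "sets D = sets borel"
    and "integrable D (\<lambda>x. (norm x)\<^sup>2)"
    and "invertible (second_moment D)"
    and "pos_def_mat S"
    and "t \<ge> CARD('n)"
  shows "(AE xs in PiM {..<t} (\<lambda>_. lev_measure S D).
           det (rescaled_cov S t xs ** matrix_inv S) \<le> 1)
    \<and> (\<integral>xs. det (rescaled_cov S t xs ** matrix_inv S) \<partial>PiM {..<t} (\<lambda>_. lev_measure S D))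
         \<ge> (1 - (real CARD('n))\<^sup>2 / real t) *
            (det (second_moment D ** matrix_inv S) /
             ((1 / real CARD('n)) * trace (second_moment D ** matrix_inv S)) ^ CARD('n))"
proof
  interpret leverage_sampling D S
    using assms(1-5)
    by (simp add: leverage_sampling_def leverage_sampling_axioms_def second_moment_space_def
        second_moment_space_axioms_def)
  show "AE xs in PiM {..<t} (\<lambda>_. lev_measure S D). det (rescaled_cov S t xs ** matrix_inv S) \<le> 1"
    using det_rescaled_cov_mult_le_one[OF pos_def_S] by simp
  have "0 \<le> det (second_moment D ** matrix_inv S) / ((1 / real CARD('n)) * total_lev) ^ CARD('n)"
    using det_mult_pos_def_bounds(1)[OF pos_semidef_second_moment pos_def_mat_matrix_inv[OF pos_def_S]]
      total_lev_pos by simp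
  then show "(\<integral>xs. det (rescaled_cov S t xs ** matrix_inv S) \<partial>PiM {..<t} (\<lambda>_. lev_measure S D))
      \<ge> (1 - (real CARD('n))\<^sup>2 / real t) *
        (det (second_moment D ** matrix_inv S) / ((1 / real CARD('n)) * total_lev) ^ CARD('n))"
    unfolding integral_det_rescaled_cov_mult[OF assms(6)]
    by (intro mult_right_mono one_minus_sq_div_le_prod assms(6))
qed

end
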